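(* Consider the generic SURQT model (6) described in the context, and let $\mathbf{Q}_1=\frac{\partial\mathbf{f}(\mathbf 0)}{\partial\mathbf{x}}-\mathbf{D}_\theta$. If $s(\mathbf{Q}_1)<0$, then the rumor-free equilibrium $\mathbf{E}_0=(\mathbf 0,\mathbf 1)$ attracts $\Omega$: every solution with initial value in $\Omega$ satisfies $\mathbf{R}(t)\to\mathbf 0$ and $\mathbf{T}(t)\to\mathbf 1$ as $t\to\infty$. Consequently $R(t)=\frac1N\sum_iR_i(t)\to0$ and $T(t)=\frac1N\sum_iT_i(t)\to1$.
   Context: $V=\{1,\dots,N\}$; $G_R=(V,E_R)$ and $G_T=(V,E_T)$ are strongly connected directed graphs. $\theta_i>0,\delta_i>0$; $\mathbf{D}_\theta=\mathrm{diag}(\theta_i)$. The functions $f_i^T,g_i^R:\mathbb{R}^N\to\mathbb{R}$ satisfy: (C1) $f_i^T$ depends on $x_j$ iff $(i,j)\in E_R$, $g_i^R$ depends on $x_j$ iff $(i,j)\in E_T$; (C2) $f_i^T(\mathbf 0)=g_i^R(\mathbf 0)=0$; (C3) twice continuously differentiable; (C4) strictly increasing in each argument; (C5) concave. $\mathbf{f}=(f_1^T,\dots,f_N^T)^T$ and $\frac{\partial\mathbf{f}(\mathbf 0)}{\partial\mathbf x}$ is its Jacobian at the origin. $s(\mathbf{A})$ is the maximum real part of an eigenvalue of $\mathbf{A}$. The generic SURQT model (6) is, for $i=1,\dots,N$, \[ \frac{dR_i}{dt}=T_i f_i^T(\mathbf{R})-R_i g_i^R(\mathbf{T})-\theta_iR_i,\qquad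 \frac{dT_i}{dt}=R_i g_i^R(\mathbf{T})-T_i f_i^T(\mathbf{R})+\delta_i(1-R_i-T_i), \] on $\Omega=\{(x_1,\dots,x_{2N})\in\mathbb{R}_+^{2N}: x_i+x_{N+i}\le1\}$. *)

theory Defs
  imports "HOL-Analysis.Analysis"
begin

definition strongly_connected :: "('n \<times> 'n) set \<Rightarrow> bool" where
  "strongly_connected E \<longleftrightarrow> (\<forall>i j. (i, j) \<in> E\<^sup>*)"

definition depends_on :: "(real^'n \<Rightarrow> real) \<Rightarrow> 'n \<Rightarrow> bool" where
  "depends_on h j \<longleftrightarrow> (\<exists>x y. (\<forall>k. k \<noteq> j \<longrightarrow> x $ k = y $ k) \<and> h x \<noteq> h y)"

definition twice_cont_diff :: "(real^'n \<Rightarrow> real) \<Rightarrow> bool" where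
  "twice_cont_diff h \<longleftrightarrow>
     (\<exists>D :: (real^'n) \<Rightarrow> ((real^'n) \<Rightarrow>\<^sub>L real).
      \<exists>D2 :: (real^'n) \<Rightarrow> ((real^'n) \<Rightarrow>\<^sub>L ((real^'n) \<Rightarrow>\<^sub>L real)).
        (\<forall>x. (h has_derivative blinfun_apply (D x)) (at x)) \<and>
        (\<forall>x. (D has_derivative blinfun_apply (D2 x)) (at x)) \<and>
        continuous_on UNIV D2)"

definition strictly_incr_in :: "(real^'n \<Rightarrow> real) \<Rightarrow> 'n \<Rightarrow> bool" where
  "strictly_incr_in h j \<longleftrightarrow> (\<forall>x (t::real). t > 0 \<longrightarrow> h x < h (x + t *\<^sub>R axis j 1))"

definition complex_eigenvalue :: "real^'n^'n \<Rightarrow> complex \<Rightarrow> bool" where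
  "complex_eigenvalue A l \<longleftrightarrow>
     (\<exists>v :: complex^'n. v \<noteq> 0 \<and> (\<chi> i j. complex_of_real (A $ i $ j)) *v v = l *s v)"

definition spectral_abscissa :: "real^'n^'n \<Rightarrow> real" where
  "spectral_abscissa A = Max (Re ` {l. complex_eigenvalue A l})"

definition diag_mat :: "real^'n \<Rightarrow> real^'n^'n" where
  "diag_mat d = (\<chi> i j. if i = j then d $ i else 0)"

end

theory Submission
  imports Defs
begin

(* Monotonicity and concavity of f with f(0) = 0 give 0 <= f_i(R) <= (J R)_i, so inside Omega the
   infected components obey R' <= (J - D_theta) R. The matrix J - D_theta is Metzler (J >= 0) with
   negative spectral abscissa, so a Perron-Frobenius argument (Brouwer's fixed point theorem on a
   Collatz-Wielandt set) gives a positive left vector w with w^T (J - D_theta) = -1. Then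
   V = w^T R is a linear Lyapunov function, V' <= -V / sum w, hence R -> 0; afterwards
   (1 - T_i)' <= -delta_i (1 - T_i) + o(1) forces T -> 1. Forward invariance of Omega comes from
   a Gronwall estimate on the sum of the squared negative parts of R_i, T_i and 1 - R_i - T_i. *)

section \<open>Stable Metzler matrices\<close>

definition metzler :: "real^'n^'n \<Rightarrow> bool" where
  "metzler M \<longleftrightarrow> (\<forall>i j. i \<noteq> j \<longrightarrow> 0 \<le> M $ i $ j)"

lemma independent_eigenvectors:
  fixes A :: "'a::field^'n^'n" and \<mu> :: "'a^'n \<Rightarrow> 'a"
  assumes "finite B" "\<forall>v\<in>B. v \<noteq> 0 \<and> A *v v = \<mu> v *s v" "inj_on \<mu> B"
  shows "vec.independent B"
  using assms
proof (induction B rule: finite_induct)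
  case empty
  then show ?case by (simp add: vec.independent_empty)
next
  case (insert b B)
  have indB: "vec.independent B" using insert by (auto simp: inj_on_insert)
  have "b \<notin> vec.span B"
  proof
    assume "b \<in> vec.span B"
    then obtain u where u: "b = (\<Sum>v\<in>B. u v *s v)"
      using vec.span_finite[OF insert(1)] by auto
    have "A *v b = (\<Sum>v\<in>B. u v *s (A *v v))"
      unfolding u by (simp add: vec.linear_sum[OF vec.linear_axioms] vec.scale)
    also have "\<dots> = (\<Sum>v\<in>B. (u v * \<mu> v) *s v)"
      using insert(4) by (intro sum.cong) auto
    finally have image: "A *v b = (\<Sum>v\<in>B. (u v * \<mu> v) *s v)" .
    have scale: "c *s (\<Sum>v\<in>B. u v *s v) = (\<Sum>v\<in>B. (u v * c) *s v)" for c
      by (simp add: vec.scale_sum_right mult.commute)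
    have "A *v b = \<mu> b *s b" using insert(4) by simp
    then have "A *v b = (\<Sum>v\<in>B. (u v * \<mu> b) *s v)"
      using scale[of "\<mu> b"] u by metis
    then have "(\<Sum>v\<in>B. (u v * (\<mu> v - \<mu> b)) *s v) = 0"
      using image by (simp add: algebra_simps sum_subtractf vector_sadd_rdistrib)
    then have "\<forall>v\<in>B. u v * (\<mu> v - \<mu> b) = 0"
      using indB[unfolded vec.independent_explicit, THEN conjunct2, rule_format,
          of "\<lambda>v. u v * (\<mu> v - \<mu> b)"] by blast
    moreover have "\<forall>v\<in>B. \<mu> v \<noteq> \<mu> b"
      using insert(2,5) by (auto simp: inj_on_def)
    ultimately have "\<forall>v\<in>B. u v = 0" by simp
    then have "b = 0" using u by simp
    then show False using insert(4) by simp
  qed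
  then show ?case using vec.independent_insertI indB by blast
qed

lemma finite_eigenvalues:
  fixes A :: "'a::field^'n^'n"
  shows "finite {l. \<exists>v. v \<noteq> 0 \<and> A *v v = l *s v}" (is "finite ?E")
proof (rule ccontr)
  assume inf: "infinite ?E"
  then obtain L where L: "L \<subseteq> ?E" "finite L" "card L = Suc CARD('n)"
    using infinite_arbitrarily_large[OF inf, of "Suc CARD('n)"] by blast
  define ev where "ev l = (SOME v. v \<noteq> 0 \<and> A *v v = l *s v)" for l
  have ev: "ev l \<noteq> 0 \<and> A *v ev l = l *s ev l" if "l \<in> ?E" for l
    using someI_ex[of "\<lambda>v. v \<noteq> 0 \<and> A *v v = l *s v"] that unfolding ev_def by auto
  have inj: "inj_on ev L"
  proof (rule inj_onI)
    fix x y assume "x \<in> L" "y \<in> L" "ev x = ev y"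
    moreover have "x \<in> ?E" "y \<in> ?E" using L(1) \<open>x \<in> L\<close> \<open>y \<in> L\<close> by auto
    ultimately have e1: "A *v ev x = x *s ev x" and e2: "A *v ev y = y *s ev y" using ev by blast+
    have "x *s ev x = y *s ev x" using e1 e2 \<open>ev x = ev y\<close> by (simp only:)
    then have "(x - y) *s ev x = 0" by (simp add: vec.scale_left_diff_distrib)
    moreover have "ev x \<noteq> 0" using ev \<open>x \<in> ?E\<close> by blast
    ultimately show "x = y" by (simp add: vec.scale_eq_0_iff)
  qed
  define \<mu> where "\<mu> = the_inv_into L ev"
  have \<mu>: "\<mu> (ev l) = l" if "l \<in> L" for l
    using the_inv_into_f_f[OF inj that] unfolding \<mu>_def .
  have "vec.independent (ev ` L)"
  proof (rule independent_eigenvectors[where A=A and \<mu>=\<mu>])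
    show "finite (ev ` L)" using L by simp
    show "\<forall>v\<in>ev ` L. v \<noteq> 0 \<and> A *v v = \<mu> v *s v"
    proof
      fix v assume "v \<in> ev ` L"
      then obtain l where l: "l \<in> L" "v = ev l" by blast
      then have lE: "l \<in> ?E" using L(1) by blast
      then show "v \<noteq> 0 \<and> A *v v = \<mu> v *s v" using ev[OF lE] \<mu>[OF l(1)] l(2) by simp
    qed
    show "inj_on \<mu> (ev ` L)" using \<mu> by (auto simp: inj_on_def)
  qed
  then have "card (ev ` L) \<le> vec.dim (ev ` L)"
    using vec.independent_bound_general by blast
  also have "\<dots> \<le> vec.dim (UNIV :: ('a^'n) set)" by (rule vec.dim_subset) simp
  also have "\<dots> = CARD('n)" by (rule vec_dim_card)
  finally show False using card_image[OF inj] L by simp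
qed

lemma complex_eigenvalue_le_spectral_abscissa:
  assumes "complex_eigenvalue A l"
  shows "Re l \<le> spectral_abscissa A"
proof -
  have "finite {l. complex_eigenvalue A l}"
    unfolding complex_eigenvalue_def by (rule finite_eigenvalues)
  then show ?thesis
    unfolding spectral_abscissa_def using assms by (intro Max_ge) auto
qed

lemma mat_matrix_vector_mult_nth: "(mat c *v x) $ i = c * (x $ i :: real)"
proof -
  have "(\<Sum>j\<in>UNIV. (if i = j then c else 0) * x $ j) = c * x $ i"
    by (simp add: if_distrib[where f="\<lambda>a. a * _"] cong: if_cong)
  then show ?thesis by (simp add: matrix_vector_mult_def mat_def)
qed

lemma diag_mat_matrix_vector_mult_nth: "(diag_mat d *v x) $ i = d $ i * x $ i"
proof -
  have "(\<Sum>j\<in>UNIV. (if i = j then d$i else 0) * x$j) = d$i * x$i"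
    by (simp add: if_distrib[where f="\<lambda>a. a * _"] cong: if_cong)
  then show ?thesis by (simp add: diag_mat_def matrix_vector_mult_def)
qed

lemma complex_eigenvalue_of_real_eigenvector:
  fixes Q :: "real^'n^'n"
  assumes "v \<noteq> 0" "Q *v v = \<mu> *\<^sub>R v"
  shows "complex_eigenvalue Q (complex_of_real \<mu>)"
  unfolding complex_eigenvalue_def
proof (intro exI conjI)
  let ?v = "\<chi> i. complex_of_real (v $ i)"
  show "?v \<noteq> 0" using assms(1) by (auto simp: vec_eq_iff)
  have "(Q *v v) $ i = \<mu> * v $ i" for i using assms(2) by simp
  then show "(\<chi> i j. complex_of_real (Q $ i $ j)) *v ?v = complex_of_real \<mu> *s ?v"
    by (auto simp: vec_eq_iff matrix_vector_mult_def simp flip: of_real_mult of_real_sum)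
qed

lemma complex_eigenvalue_of_transpose_eigenvector:
  fixes Q :: "real^'n^'n"
  assumes "z \<noteq> 0" "transpose Q *v z = \<mu> *\<^sub>R z"
  shows "complex_eigenvalue Q (complex_of_real \<mu>)"
proof -
  define N where "N = Q - mat \<mu>"
  have "transpose N = transpose Q - mat \<mu>"
    unfolding N_def by (simp add: transpose_def mat_def vec_eq_iff)
  then have "transpose N *v z = 0"
    using assms(2) unfolding \<open>transpose N = _\<close>
    by (simp add: matrix_vector_mult_diff_rdistrib vec_eq_iff mat_matrix_vector_mult_nth)
  then have "\<not> invertible (transpose N)"
    using assms(1) invertible_left_inverse matrix_left_invertible_ker by blast
  then have "\<not> invertible N" using invertible_det_nz det_transpose by metis
  then obtain v where v: "v \<noteq> 0" "N *v v = 0"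
    using invertible_left_inverse matrix_left_invertible_ker by blast
  then have "Q *v v = \<mu> *\<^sub>R v"
    unfolding N_def by (simp add: matrix_vector_mult_diff_rdistrib vec_eq_iff mat_matrix_vector_mult_nth)
  then show ?thesis using complex_eigenvalue_of_real_eigenvector v(1) by blast
qed

lemma matrix_vector_mult_nonneg:
  fixes P :: "real^'n^'m"
  assumes "\<forall>i j. 0 \<le> P$i$j" "\<forall>j. 0 \<le> x$j"
  shows "0 \<le> (P *v x)$i"
  using assms by (auto simp: matrix_vector_mult_def intro!: sum_nonneg)

lemma matrix_vector_mult_mono:
  fixes P :: "real^'n^'m"
  assumes "\<forall>i j. 0 \<le> P$i$j" "\<forall>j. x$j \<le> y$j"
  shows "(P *v x)$i \<le> (P *v y)$i"
  using assms by (auto simp: matrix_vector_mult_def intro!: sum_mono mult_left_mono)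

definition collatz_wielandt_set :: "real^'n^'n \<Rightarrow> real \<Rightarrow> (real^'n) set" where
  "collatz_wielandt_set P c =
     {z. (\<forall>i. 0 \<le> z$i) \<and> (\<Sum>i\<in>UNIV. z$i) = 1 \<and> (\<forall>i. c * z$i \<le> (P *v z)$i)}"

lemma compact_collatz_wielandt_set: "compact (collatz_wielandt_set P c)"
proof -
  have "closed (collatz_wielandt_set P c)"
    unfolding collatz_wielandt_set_def
    by (intro closed_Collect_conj closed_Collect_all closed_Collect_le closed_Collect_eq
        continuous_intros)
  moreover have "collatz_wielandt_set P c \<subseteq> cbox 0 1"
  proof
    fix z assume z: "z \<in> collatz_wielandt_set P c"
    then have "z$i \<le> (\<Sum>i\<in>UNIV. z$i)" for i
      by (intro member_le_sum) (auto simp: collatz_wielandt_set_def)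
    then show "z \<in> cbox 0 1" using z by (auto simp: mem_box_cart collatz_wielandt_set_def)
  qed
  ultimately show ?thesis
    using bounded_subset bounded_cbox compact_eq_bounded_closed by blast
qed

lemma convex_collatz_wielandt_set: "convex (collatz_wielandt_set P c)"
  unfolding convex_def
proof (intro ballI allI impI)
  fix x z and u v :: real
  assume xz: "x \<in> collatz_wielandt_set P c" "z \<in> collatz_wielandt_set P c"
    and uv: "0 \<le> u" "0 \<le> v" "u + v = 1"
  have "c * (u *\<^sub>R x + v *\<^sub>R z)$i \<le> (P *v (u *\<^sub>R x + v *\<^sub>R z))$i" for i
  proof -
    have "c * x$i \<le> (P *v x)$i" "c * z$i \<le> (P *v z)$i"
      using xz by (auto simp: collatz_wielandt_set_def)
    then have "u * (c * x$i) + v * (c * z$i) \<le> u * (P *v x)$i + v * (P *v z)$i"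
      using uv by (intro add_mono mult_left_mono) auto
    then show ?thesis by (simp add: matrix_vector_right_distrib matrix_vector_mult_scaleR algebra_simps)
  qed
  then show "u *\<^sub>R x + v *\<^sub>R z \<in> collatz_wielandt_set P c"
    using xz uv by (simp add: collatz_wielandt_set_def sum.distrib sum_distrib_left[symmetric])
qed

text \<open>Perron--Frobenius via Brouwer: normalising z \<mapsto> P z to unit coordinate sum maps
  the Collatz--Wielandt set into itself.\<close>

lemma nonneg_matrix_eigenvector:
  fixes P :: "real^'n^'n"
  assumes P: "\<forall>i j. 0 \<le> P$i$j" and c: "c > 0" and ne: "collatz_wielandt_set P c \<noteq> {}"
  shows "\<exists>\<mu> z. c \<le> \<mu> \<and> z \<noteq> 0 \<and> P *v z = \<mu> *\<^sub>R z"
proof -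
  let ?S = "collatz_wielandt_set P c"
  define s where "s z = (\<Sum>i\<in>UNIV. (P *v z)$i)" for z
  define \<phi> where "\<phi> z = (1 / s z) *\<^sub>R (P *v z)" for z
  have s: "c \<le> s z" if "z \<in> ?S" for z
  proof -
    have "c = (\<Sum>i\<in>UNIV. c * z$i)"
      using that by (simp add: collatz_wielandt_set_def sum_distrib_left[symmetric])
    also have "\<dots> \<le> s z"
      unfolding s_def using that by (intro sum_mono) (auto simp: collatz_wielandt_set_def)
    finally show ?thesis .
  qed
  have "\<forall>z\<in>?S. s z \<noteq> 0" using s c by force
  then have "continuous_on ?S \<phi>"
    unfolding \<phi>_def s_def by (intro continuous_intros) auto
  moreover have "\<phi> z \<in> ?S" if z: "z \<in> ?S" for z
  proof -
    have z0: "\<forall>i. 0 \<le> z$i" and zc: "\<forall>i. c * z$i \<le> (P *v z)$i"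
      using z by (auto simp: collatz_wielandt_set_def)
    have "(P *v (c *\<^sub>R z))$i \<le> (P *v (P *v z))$i" for i
      using zc by (intro matrix_vector_mult_mono[OF P]) auto
    then have "c * (\<phi> z)$i \<le> (P *v \<phi> z)$i" for i
      using s[OF z] c by (simp add: \<phi>_def matrix_vector_mult_scaleR divide_right_mono)
    moreover have "0 \<le> (\<phi> z)$i" for i
      using matrix_vector_mult_nonneg[OF P z0] s[OF z] c by (simp add: \<phi>_def)
    moreover have "(\<Sum>i\<in>UNIV. (\<phi> z)$i) = 1"
      using s[OF z] c by (simp add: \<phi>_def s_def sum_divide_distrib[symmetric])
    ultimately show ?thesis by (simp add: collatz_wielandt_set_def)
  qed
  ultimately obtain z where z: "z \<in> ?S" "\<phi> z = z"
    using brouwer[OF compact_collatz_wielandt_set convex_collatz_wielandt_set ne] by blast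
  have "P *v z = s z *\<^sub>R \<phi> z"
    using s[OF z(1)] c by (simp add: \<phi>_def)
  then have "P *v z = s z *\<^sub>R z" using z(2) by simp
  moreover have "z \<noteq> 0" using z(1) by (auto simp: collatz_wielandt_set_def)
  ultimately show ?thesis using s[OF z(1)] by blast
qed

lemma metzler_nonneg_eigenvalue:
  fixes M :: "real^'n^'n"
  assumes M: "metzler M" and y: "\<forall>i. 0 \<le> y$i" "y \<noteq> 0" "\<forall>i. 0 \<le> (M *v y)$i"
  shows "\<exists>\<mu> z. 0 \<le> \<mu> \<and> z \<noteq> 0 \<and> M *v z = \<mu> *\<^sub>R z"
proof -
  define c where "c = 1 + (\<Sum>i\<in>UNIV. \<bar>M$i$i\<bar>)"
  have c: "c > 0" unfolding c_def by (simp add: add_pos_nonneg sum_nonneg)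
  have diagonal: "\<bar>M$i$i\<bar> \<le> c" for i
    unfolding c_def using member_le_sum[of i UNIV "\<lambda>i. \<bar>M$i$i\<bar>"] by simp
  have P: "\<forall>i j. 0 \<le> (M + mat c)$i$j"
  proof (intro allI)
    fix i j show "0 \<le> (M + mat c)$i$j"
      using M diagonal[of i] by (cases "i = j") (auto simp: metzler_def mat_def)
  qed
  have Pv: "((M + mat c) *v z)$i = (M *v z)$i + c * z$i" for z i
    by (simp add: matrix_vector_mult_add_rdistrib mat_matrix_vector_mult_nth)
  have "(\<Sum>i\<in>UNIV. y$i) > 0"
  proof -
    obtain i where "y$i \<noteq> 0" using y(2) by (auto simp: vec_eq_iff)
    then have "0 < y$i" using y(1) by (metis less_eq_real_def)
    also have "y$i \<le> (\<Sum>i\<in>UNIV. y$i)" using y(1) by (intro member_le_sum) auto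
    finally show ?thesis .
  qed
  then have "(1 / (\<Sum>i\<in>UNIV. y$i)) *\<^sub>R y \<in> collatz_wielandt_set (M + mat c) c"
    using y(1,3) by (simp add: collatz_wielandt_set_def matrix_vector_mult_scaleR Pv
        sum_divide_distrib[symmetric] divide_le_cancel field_simps)
  then obtain \<mu> z where "c \<le> \<mu>" "z \<noteq> 0" "(M + mat c) *v z = \<mu> *\<^sub>R z"
    using nonneg_matrix_eigenvector[OF P c] by blast
  moreover from this have "M *v z = (\<mu> - c) *\<^sub>R z"
    using Pv by (simp add: vec_eq_iff algebra_simps)
  ultimately show ?thesis by (intro exI[of _ "\<mu> - c"] exI[of _ z]) simp
qed

lemma metzler_diagonal_le:
  fixes M :: "real^'n^'n"
  assumes "metzler M" "\<forall>j. 0 \<le> v$j"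
  shows "M$i$i * v$i \<le> (M *v v)$i"
proof -
  have "(M *v v)$i = M$i$i * v$i + (\<Sum>j\<in>UNIV-{i}. M$i$j * v$j)"
    unfolding matrix_vector_mult_def by (simp add: sum.remove[of UNIV i])
  moreover have "0 \<le> (\<Sum>j\<in>UNIV-{i}. M$i$j * v$j)"
    using assms by (intro sum_nonneg) (auto simp: metzler_def)
  ultimately show ?thesis by simp
qed

text \<open>If w were not nonnegative, its negative part would be a nonzero nonnegative vector
  on which M is nonnegative, and Perron--Frobenius would produce a nonnegative eigenvalue.\<close>

lemma metzler_solution_positive:
  fixes M :: "real^'n^'n"
  assumes M: "metzler M"
    and no_eigenvalue: "\<And>\<mu> z. 0 \<le> \<mu> \<Longrightarrow> z \<noteq> 0 \<Longrightarrow> M *v z \<noteq> \<mu> *\<^sub>R z"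
    and Mw: "M *v w = - 1"
  shows "0 < w$i"
proof -
  define u where "u = (\<chi> i. max (w$i) 0) - w"
  have u: "\<forall>i. 0 \<le> u$i" by (simp add: u_def)
  have "0 \<le> (M *v u)$i" for i
  proof (cases "w$i < 0")
    case True
    have "M$i$i * max (w$i) 0 \<le> (M *v (\<chi> i. max (w$i) 0))$i"
      using metzler_diagonal_le[OF M, of "\<chi> i. max (w$i) 0"] by simp
    then show ?thesis using True Mw by (simp add: u_def matrix_vector_mult_diff_distrib)
  next
    case False
    then show ?thesis
      using metzler_diagonal_le[OF M u, of i] by (simp add: u_def)
  qed
  then have "u = 0"
    using metzler_nonneg_eigenvalue[OF M u] no_eigenvalue by blast
  have w: "\<forall>i. 0 \<le> w$i"
  proof
    fix i have "u$i = 0" using \<open>u = 0\<close> by simp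
    then show "0 \<le> w$i" by (simp add: u_def max_def split: if_splits)
  qed
  show "0 < w$i"
  proof (rule ccontr)
    assume "\<not> 0 < w$i"
    then have "w$i = 0" using w by (metis less_eq_real_def)
    then show False using metzler_diagonal_le[OF M w, of i] Mw by simp
  qed
qed

lemma positive_left_vector_of_stable_metzler:
  fixes Q :: "real^'n^'n"
  assumes Q: "metzler Q" and stable: "spectral_abscissa Q < 0"
  shows "\<exists>w. (\<forall>i. 0 < w$i) \<and> w v* Q = - 1"
proof -
  define M where "M = transpose Q"
  have M: "metzler M" using Q by (simp add: M_def metzler_def transpose_def)
  have no_eigenvalue: "M *v z \<noteq> \<mu> *\<^sub>R z" if "0 \<le> \<mu>" "z \<noteq> 0" for \<mu> z
  proof
    assume "M *v z = \<mu> *\<^sub>R z"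
    then have "complex_eigenvalue Q (complex_of_real \<mu>)"
      using complex_eigenvalue_of_transpose_eigenvector that(2) unfolding M_def by blast
    then show False
      using complex_eigenvalue_le_spectral_abscissa stable that(1) by fastforce
  qed
  then have "\<forall>x. M *v x = 0 \<longrightarrow> x = 0" by (metis scaleR_zero_left order_refl)
  then obtain B where B: "M ** B = mat 1"
    using invertible_left_inverse matrix_left_invertible_ker invertible_def by metis
  have Mw: "M *v (B *v (- 1)) = - 1"
    by (simp add: matrix_vector_mul_assoc B)
  then have "w v* Q = - 1" if "w = B *v (- 1)" for w using that by (simp add: M_def)
  then show ?thesis using metzler_solution_positive[OF M no_eigenvalue Mw] by blast
qed

section \<open>Monotone, concave and smooth functions\<close>

lemma le_add_axis:
  fixes h :: "real^'n \<Rightarrow> real"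
  assumes h: "\<forall>j. depends_on h j \<longrightarrow> strictly_incr_in h j" and t: "0 \<le> t"
  shows "h x \<le> h (x + t *\<^sub>R axis j 1)"
proof (cases "depends_on h j")
  case True
  then show ?thesis
    using h t unfolding strictly_incr_in_def by (cases "t = 0") (auto intro: less_imp_le)
next
  case False
  have "\<forall>k. k \<noteq> j \<longrightarrow> x $ k = (x + t *\<^sub>R axis j 1) $ k" by (simp add: axis_def)
  then have "h x = h (x + t *\<^sub>R axis j 1)" using False unfolding depends_on_def by blast
  then show ?thesis by simp
qed

lemma componentwise_mono:
  fixes h :: "real^'n \<Rightarrow> real"
  assumes h: "\<forall>j. depends_on h j \<longrightarrow> strictly_incr_in h j" and le: "\<forall>k. x$k \<le> y$k"
  shows "h x \<le> h y"
proof -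
  define z where "z S = (\<chi> k. if k \<in> S then y$k else x$k)" for S
  have "h x \<le> h (z S)" if "finite S" for S
    using that
  proof (induction S rule: finite_induct)
    case (insert j S)
    have "z (insert j S) = z S + (y$j - x$j) *\<^sub>R axis j 1"
      using insert(2) by (auto simp: z_def vec_eq_iff axis_def)
    then show ?case using insert le_add_axis[OF h, of "y$j - x$j" "z S" j] le by simp
  qed (simp add: z_def)
  moreover have "z UNIV = y" by (simp add: z_def vec_eq_iff)
  ultimately show ?thesis by force
qed

lemma componentwise_mono_of_dependence:
  fixes h :: "'i \<Rightarrow> real^'n \<Rightarrow> real"
  assumes "\<forall>i j. depends_on (h i) j \<longleftrightarrow> (i, j) \<in> E"
    and "\<forall>i j. (i, j) \<in> E \<longrightarrow> strictly_incr_in (h i) j"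
  shows "\<forall>i x y. (\<forall>k. x$k \<le> y$k) \<longrightarrow> h i x \<le> h i y"
proof -
  have "\<forall>j. depends_on (h i) j \<longrightarrow> strictly_incr_in (h i) j" for i
    using assms by blast
  then show ?thesis using componentwise_mono by blast
qed

lemma has_real_derivative_along_line:
  fixes h :: "'a::real_normed_vector \<Rightarrow> real"
  assumes "(h has_derivative L) (at 0)"
  shows "((\<lambda>s. h (s *\<^sub>R v)) has_real_derivative L v) (at 0)"
proof -
  have "((\<lambda>s::real. s *\<^sub>R v) has_derivative (\<lambda>s. s *\<^sub>R v)) (at 0)"
    by (intro derivative_eq_intros) auto
  then have "((\<lambda>s. h (s *\<^sub>R v)) has_derivative (\<lambda>s. L (s *\<^sub>R v))) (at 0)"
    using has_derivative_compose assms by fastforce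
  moreover have "linear L" using assms has_derivative_linear by blast
  ultimately show ?thesis
    by (simp add: has_field_derivative_def linear_cmul mult.commute[of _ "L v"])
qed

lemma derivative_nonneg_of_increasing_along:
  fixes h :: "'a::real_normed_vector \<Rightarrow> real"
  assumes "(h has_derivative L) (at 0)" and incr: "\<forall>s>0. h 0 \<le> h (s *\<^sub>R v)"
  shows "0 \<le> L v"
proof (rule ccontr)
  assume "\<not> 0 \<le> L v"
  then have "L v < 0" by simp
  from DERIV_neg_dec_right[OF has_real_derivative_along_line[OF assms(1)] this]
  obtain d where "0 < d" "\<forall>s>0. s < d \<longrightarrow> h ((0 + s) *\<^sub>R v) < h (0 *\<^sub>R v)"
    by blast
  then have "h ((d/2) *\<^sub>R v) < h 0" by simp
  then show False using incr \<open>0 < d\<close> by (meson half_gt_zero not_le)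
qed

lemma concave_le_derivative_at_0:
  fixes h :: "'a::real_normed_vector \<Rightarrow> real"
  assumes concave: "concave_on UNIV h" and "h 0 = 0" and "(h has_derivative L) (at 0)"
  shows "h x \<le> L x"
proof -
  have "((\<lambda>s. (h ((0 + s) *\<^sub>R x) - h (0 *\<^sub>R x)) / s) \<longlongrightarrow> L x) (at 0)"
    using has_real_derivative_along_line[OF assms(3)] unfolding DERIV_def .
  then have slope: "((\<lambda>s. h (s *\<^sub>R x) / s) \<longlongrightarrow> L x) (at_right 0)"
    using \<open>h 0 = 0\<close> by (simp add: filterlim_at_split)
  have "\<forall>\<^sub>F s in at_right 0. h x \<le> h (s *\<^sub>R x) / s"
    unfolding eventually_at_right[OF zero_less_one]
  proof (intro exI[of _ 1] conjI allI impI)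
    fix s :: real assume s: "0 < s" "s < 1"
    then have "(1 - s) * h 0 + s * h x \<le> h ((1 - s) *\<^sub>R 0 + s *\<^sub>R x)"
      using concave_onD[OF concave, of s 0 x] by simp
    then show "h x \<le> h (s *\<^sub>R x) / s" using s \<open>h 0 = 0\<close> by (simp add: field_simps)
  qed simp
  then show ?thesis
    by (rule tendsto_le[OF trivial_limit_at_right_real slope tendsto_const])
qed

lemma jacobian_row:
  fixes h :: "'n::finite \<Rightarrow> real^'m \<Rightarrow> real" and J :: "real^'m^'n"
  assumes "((\<lambda>x. \<chi> i. h i x) has_derivative (\<lambda>v. J *v v)) (at 0)"
  shows "(h i has_derivative (\<lambda>v. (J *v v) $ i)) (at 0)"
  using bounded_linear.has_derivative[OF bounded_linear_vec_nth assms] by simp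

lemma jacobian_nonneg:
  fixes h :: "'n::finite \<Rightarrow> real^'m \<Rightarrow> real" and J :: "real^'m^'n"
  assumes "((\<lambda>x. \<chi> i. h i x) has_derivative (\<lambda>v. J *v v)) (at 0)"
    and mono: "\<forall>i x y. (\<forall>k. x$k \<le> y$k) \<longrightarrow> h i x \<le> h i y"
  shows "0 \<le> J $ i $ j"
proof -
  have "(h i has_derivative (\<lambda>v. (J *v v) $ i)) (at 0)"
    by (rule jacobian_row[OF assms(1)])
  then have "0 \<le> (J *v axis j 1) $ i"
    by (rule derivative_nonneg_of_increasing_along) (use mono in \<open>simp add: axis_def\<close>)
  then show ?thesis by (simp add: matrix_vector_mult_basis column_def)
qed

lemma concave_le_jacobian:
  fixes h :: "'n::finite \<Rightarrow> real^'m \<Rightarrow> real" and J :: "real^'m^'n"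
  assumes "((\<lambda>x. \<chi> i. h i x) has_derivative (\<lambda>v. J *v v)) (at 0)"
    and "concave_on UNIV (h i)" "h i 0 = 0"
  shows "h i x \<le> (J *v x) $ i"
  using concave_le_derivative_at_0[OF assms(2,3) jacobian_row[OF assms(1)]] .

lemma twice_cont_diff_imp_continuous_derivative:
  assumes "twice_cont_diff h"
  shows "\<exists>D. (\<forall>x. (h has_derivative blinfun_apply (D x)) (at x)) \<and> continuous_on UNIV D"
proof -
  obtain D D2 where D: "\<forall>x. (h has_derivative blinfun_apply (D x)) (at x)"
    "\<forall>x. (D has_derivative blinfun_apply (D2 x)) (at x)"
    using assms unfolding twice_cont_diff_def by blast
  have "continuous_on UNIV D"
    using D(2) has_derivative_continuous continuous_at_imp_continuous_on by blast
  then show ?thesis using D(1) by blast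
qed

lemma twice_cont_diff_imp_continuous:
  assumes "twice_cont_diff h"
  shows "continuous_on UNIV h"
  using twice_cont_diff_imp_continuous_derivative[OF assms] has_derivative_continuous
    continuous_at_imp_continuous_on by blast

lemma twice_cont_diff_lipschitz_on_cball:
  fixes h :: "real^'n \<Rightarrow> real"
  assumes "twice_cont_diff h"
  shows "\<exists>L\<ge>0. \<forall>x\<in>cball 0 r. \<forall>y\<in>cball 0 r. \<bar>h x - h y\<bar> \<le> L * norm (x - y)"
proof -
  obtain D where D: "\<forall>x. (h has_derivative blinfun_apply (D x)) (at x)" "continuous_on UNIV D"
    using twice_cont_diff_imp_continuous_derivative[OF assms] by blast
  have "continuous_on (cball 0 r) (\<lambda>x. norm (D x))"
    using D(2) by (intro continuous_intros) (auto intro: continuous_on_subset)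
  then have "compact ((\<lambda>x. norm (D x)) ` cball 0 r)"
    by (intro compact_continuous_image) auto
  then have "bounded ((\<lambda>x. norm (D x)) ` cball 0 r)" by (rule compact_imp_bounded)
  then obtain B where B: "B > 0" "\<forall>x\<in>cball 0 r. norm (norm (D x)) \<le> B"
    unfolding bounded_pos by auto
  have "\<forall>x\<in>cball 0 r. \<forall>y\<in>cball 0 r. \<bar>h x - h y\<bar> \<le> B * norm (x - y)"
  proof (intro ballI)
    fix x y :: "real^'n" assume xy: "x \<in> cball 0 r" "y \<in> cball 0 r"
    have "norm (h x - h y) \<le> B * norm (x - y)"
    proof (rule differentiable_bound[where f'="\<lambda>x. blinfun_apply (D x)"])
      show "convex (cball (0::real^'n) r)" by simp
      show "\<And>x. x \<in> cball 0 r \<Longrightarrow> (h has_derivative blinfun_apply (D x)) (at x within cball 0 r)"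
        using D(1) has_derivative_at_withinI by blast
      show "\<And>x. x \<in> cball 0 r \<Longrightarrow> onorm (blinfun_apply (D x)) \<le> B"
        using B(2) by (simp add: norm_blinfun.rep_eq[symmetric])
    qed (use xy in auto)
    then show "\<bar>h x - h y\<bar> \<le> B * norm (x - y)" by simp
  qed
  then show ?thesis using B(1) by (intro exI[of _ B]) auto
qed

lemma uniform_lipschitz_on_cball:
  fixes h :: "'i::finite \<Rightarrow> real^'n \<Rightarrow> real"
  assumes "\<forall>i. twice_cont_diff (h i)"
  shows "\<exists>L\<ge>0. \<forall>i. \<forall>x\<in>cball 0 r. \<forall>y\<in>cball 0 r. \<bar>h i x - h i y\<bar> \<le> L * norm (x - y)"
proof -
  have "\<forall>i. \<exists>L\<ge>0. \<forall>x\<in>cball 0 r. \<forall>y\<in>cball 0 r. \<bar>h i x - h i y\<bar> \<le> L * norm (x - y)"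
    using twice_cont_diff_lipschitz_on_cball assms by blast
  from choice[OF this] obtain L
    where L: "\<forall>i. 0 \<le> L i \<and> (\<forall>x\<in>cball 0 r. \<forall>y\<in>cball 0 r. \<bar>h i x - h i y\<bar> \<le> L i * norm (x - y))"
    by blast
  have "L i \<le> (\<Sum>i\<in>UNIV. L i)" for i
    using L by (intro member_le_sum) auto
  then have "\<bar>h i x - h i y\<bar> \<le> (\<Sum>i\<in>UNIV. L i) * norm (x - y)"
    if "x \<in> cball 0 r" "y \<in> cball 0 r" for i x y
    using L that by (meson mult_right_mono norm_ge_zero order_trans)
  moreover have "0 \<le> (\<Sum>i\<in>UNIV. L i)" using L by (simp add: sum_nonneg)
  ultimately show ?thesis by blast
qed

lemma monotone_lipschitz_bounds:
  fixes h :: "real^'n \<Rightarrow> real"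
  assumes mono: "\<forall>x y. (\<forall>k. x$k \<le> y$k) \<longrightarrow> h x \<le> h y" and h0: "h 0 = 0"
    and lip: "\<forall>x\<in>cball 0 r. \<forall>y\<in>cball 0 r. \<bar>h x - h y\<bar> \<le> L * norm (x - y)" and L: "L \<ge> 0"
    and x: "norm x \<le> r" and sq: "sqrt (\<Sum>j\<in>UNIV. (min (x$j) 0)^2) \<le> s"
  shows "h x \<ge> - L * s" "\<bar>h x\<bar> \<le> L * r"
proof -
  have r0: "r \<ge> 0" using x norm_ge_zero order_trans by blast
  have xc: "x \<in> cball 0 r" using x by simp
  have 0: "(0::real^'n) \<in> cball 0 r" using r0 by simp
  have "\<bar>h x - h 0\<bar> \<le> L * norm (x - 0)" using lip xc 0 by blast
  then show "\<bar>h x\<bar> \<le> L * r" using h0 x L by (smt (verit) mult_left_mono diff_zero)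
  define xp where "xp = (\<chi> j. max (x$j) 0)"
  have "norm xp \<le> norm x" unfolding xp_def by (rule norm_le_componentwise_cart) auto
  then have xpc: "xp \<in> cball 0 r" using x by simp
  have "h 0 \<le> h xp" using mono by (simp add: xp_def)
  then have hxp: "h xp \<ge> 0" using h0 by simp
  have "x - xp = (\<chi> j. min (x$j) 0)" by (auto simp: xp_def vec_eq_iff min_def max_def)
  then have "norm (x - xp) \<le> s" using sq by (simp add: norm_vec_def L2_set_def)
  then have "L * norm (x - xp) \<le> L * s" using L by (intro mult_left_mono)
  moreover have "\<bar>h x - h xp\<bar> \<le> L * norm (x - xp)" using lip xc xpc by blast
  ultimately show "h x \<ge> - L * s" using hxp by linarith
qed

section \<open>Differential inequalities and limits\<close>

lemma differential_inequality_exp_bound: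
  fixes y y' :: "real \<Rightarrow> real"
  assumes "t0 \<le> t1"
    and der: "\<forall>t\<in>{t0..t1}. (y has_real_derivative y' t) (at t within {t0..t1})"
    and le: "\<forall>t\<in>{t0..t1}. y' t \<le> a * y t"
  shows "y t1 \<le> y t0 * exp (a * (t1 - t0))"
proof -
  define z where "z t = y t * exp (- a * t)" for t
  have "continuous_on {t0..t1} y"
    using der DERIV_continuous continuous_on_eq_continuous_within by blast
  then have cz: "continuous_on {t0..t1} z" unfolding z_def by (intro continuous_intros)
  have "z t1 \<le> z t0"
  proof (rule DERIV_nonpos_imp_decreasing_open[OF \<open>t0 \<le> t1\<close> _ cz])
    fix t assume t: "t0 < t" "t < t1"
    have "(y has_real_derivative y' t) (at t within {t0..t1})" using der t by auto
    then have "(y has_real_derivative y' t) (at t)"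
      using at_within_Icc_at[OF t] by simp
    then have "(z has_real_derivative (y' t - a * y t) * exp (- a * t)) (at t)"
      unfolding z_def by (auto intro!: derivative_eq_intros simp: algebra_simps)
    moreover have "(y' t - a * y t) * exp (- a * t) \<le> 0"
      using le t by (simp add: mult_nonpos_nonneg)
    ultimately show "\<exists>d. (z has_real_derivative d) (at t) \<and> d \<le> 0" by blast
  qed
  then have "y t1 * exp (- a * t1) * exp (a * t1) \<le> y t0 * exp (- a * t0) * exp (a * t1)"
    by (intro mult_right_mono) (auto simp: z_def)
  then show ?thesis by (simp add: mult.assoc flip: exp_add) (simp add: algebra_simps)
qed

lemma exp_decay_tendsto_0:
  fixes a :: real
  assumes "0 < a"
  shows "((\<lambda>t. c * exp (- a * (t - t0))) \<longlongrightarrow> 0) at_top"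
proof -
  have "filterlim (\<lambda>t. - a * t0 + a * t) at_top at_top"
    by (rule filterlim_tendsto_add_at_top[OF tendsto_const
          filterlim_tendsto_pos_mult_at_top[OF tendsto_const assms filterlim_ident]])
  then have "filterlim (\<lambda>t. - a * (t - t0)) at_bot at_top"
    by (simp add: filterlim_uminus_at_bot algebra_simps)
  then show ?thesis
    by (intro tendsto_mult_right_zero filterlim_compose[OF exp_at_bot])
qed

lemma tendsto_0_of_differential_inequality:
  fixes y y' e :: "real \<Rightarrow> real"
  assumes a: "0 < a"
    and der: "\<forall>t\<ge>0. (y has_real_derivative y' t) (at t within {0..})"
    and le: "\<forall>t\<ge>0. y' t \<le> - a * y t + e t"
    and e: "(e \<longlongrightarrow> 0) at_top"
    and nonneg: "\<forall>t\<ge>0. 0 \<le> y t"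
  shows "(y \<longlongrightarrow> 0) at_top"
proof (rule tendstoI)
  fix \<epsilon> :: real assume \<epsilon>: "\<epsilon> > 0"
  obtain T where T: "\<forall>t\<ge>T. \<bar>e t\<bar> < a * \<epsilon> / 2"
    using tendstoD[OF e, of "a * \<epsilon> / 2"] a \<epsilon> by (auto simp: eventually_at_top_linorder)
  define t0 where "t0 = max T 0"
  have t0: "0 \<le> t0" "\<forall>t\<ge>t0. e t < a * \<epsilon> / 2"
    using T by (auto simp: t0_def)
  have bound: "y t \<le> \<epsilon>/2 + y t0 * exp (- a * (t - t0))" if "t0 \<le> t" for t
  proof -
    have "((\<lambda>s. y s - \<epsilon>/2) has_real_derivative y' s) (at s within {t0..t})"
      if "s \<in> {t0..t}" for s
    proof -
      have "(y has_real_derivative y' s) (at s within {0..})" using der that t0(1) by auto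
      then have "(y has_real_derivative y' s) (at s within {t0..t})"
        by (rule DERIV_subset) (use t0(1) in auto)
      then show ?thesis by (intro derivative_eq_intros) auto
    qed
    moreover have "y' s \<le> - a * (y s - \<epsilon>/2)" if "s \<in> {t0..t}" for s
    proof -
      have "y' s \<le> - a * y s + e s" "e s < a * \<epsilon> / 2" using le t0 that by auto
      then show ?thesis by (simp add: algebra_simps)
    qed
    ultimately have "y t - \<epsilon>/2 \<le> (y t0 - \<epsilon>/2) * exp (- a * (t - t0))"
      using differential_inequality_exp_bound[OF that, of "\<lambda>s. y s - \<epsilon>/2"] by blast
    also have "\<dots> \<le> y t0 * exp (- a * (t - t0))"
      using \<epsilon> by (intro mult_right_mono) auto
    finally show ?thesis by simp
  qed
  have "\<forall>\<^sub>F t in at_top. y t0 * exp (- a * (t - t0)) < \<epsilon>/2"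
    by (rule order_tendstoD(2)[OF exp_decay_tendsto_0[OF a]]) (use \<epsilon> in simp)
  then show "\<forall>\<^sub>F t in at_top. dist (y t) 0 < \<epsilon>"
    using eventually_ge_at_top[of t0]
  proof eventually_elim
    case (elim t)
    then show ?case using bound[of t] nonneg t0(1) by simp
  qed
qed

lemma has_real_derivative_vec_nth:
  assumes "(x has_vector_derivative x') F"
  shows "((\<lambda>t. x t $ i) has_real_derivative x' $ i) F"
proof -
  have "(x has_derivative (\<lambda>t. t *\<^sub>R x')) F" using assms by (simp add: has_vector_derivative_def)
  from bounded_linear.has_derivative[OF bounded_linear_vec_nth[of i] this]
  have "((\<lambda>t. x t $ i) has_derivative (\<lambda>t. t * x' $ i)) F" by simp
  moreover have "(\<lambda>t. t * x' $ i) = (*) (x' $ i)" by (auto simp: mult.commute)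
  ultimately show ?thesis by (simp add: has_field_derivative_def)
qed

lemma vec_tendsto_0_of_weighted_sum:
  fixes X :: "real \<Rightarrow> real^'n"
  assumes w: "\<forall>i. 0 < w$i" and nonneg: "\<And>t i. 0 \<le> t \<Longrightarrow> 0 \<le> X t $ i"
    and "((\<lambda>t. \<Sum>i\<in>UNIV. w$i * X t $ i) \<longlongrightarrow> 0) at_top"
  shows "(X \<longlongrightarrow> 0) at_top"
proof -
  have le: "X t $ i \<le> (\<Sum>i\<in>UNIV. w$i * X t $ i) / w$i" if "0 \<le> t" for t i
  proof -
    have "w$i * X t $ i \<le> (\<Sum>i\<in>UNIV. w$i * X t $ i)"
      using w nonneg[OF that] by (intro member_le_sum) (auto intro: mult_nonneg_nonneg less_imp_le)
    then show ?thesis using w by (simp add: le_divide_eq mult.commute)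
  qed
  have "((\<lambda>t. X t $ i) \<longlongrightarrow> 0) at_top" for i
  proof (rule tendsto_sandwich[of "\<lambda>_. 0" _ _ "\<lambda>t. (\<Sum>i\<in>UNIV. w$i * X t $ i) / w$i"])
    show "\<forall>\<^sub>F t in at_top. 0 \<le> X t $ i"
      using eventually_ge_at_top[of 0] by eventually_elim (rule nonneg)
    show "\<forall>\<^sub>F t in at_top. X t $ i \<le> (\<Sum>i\<in>UNIV. w$i * X t $ i) / w$i"
      using eventually_ge_at_top[of 0] by eventually_elim (rule le)
    show "((\<lambda>t. (\<Sum>i\<in>UNIV. w$i * X t $ i) / w$i) \<longlongrightarrow> 0) at_top"
      using tendsto_divide_zero[OF assms(3)] by blast
  qed simp
  then show ?thesis using vec_tendstoI[of X 0] by simp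
qed

lemma tendsto_average:
  fixes X :: "'a \<Rightarrow> real^'n"
  assumes "(X \<longlongrightarrow> c) F"
  shows "((\<lambda>t. (\<Sum>i\<in>UNIV. X t $ i) / real CARD('n))
           \<longlongrightarrow> (\<Sum>i\<in>UNIV. c $ i) / real CARD('n)) F"
  using assms by (intro tendsto_divide tendsto_sum tendsto_vec_nth tendsto_const) auto

section \<open>A penalty function for the region Omega\<close>

definition Omega :: "((real^'n) \<times> (real^'n)) set" where
  "Omega = {(x, y). \<forall>i. 0 \<le> x$i \<and> 0 \<le> y$i \<and> x$i + y$i \<le> 1}"

definition omega_penalty :: "real^'n \<Rightarrow> real^'n \<Rightarrow> real" where
  "omega_penalty x y =
     (\<Sum>i\<in>UNIV. (min (x$i) 0)^2 + (min (y$i) 0)^2 + (min (1 - x$i - y$i) 0)^2)"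

lemma omega_penalty_nonneg: "0 \<le> omega_penalty x y"
  unfolding omega_penalty_def by (intro sum_nonneg) auto

lemma omega_penalty_eq_0_iff: "omega_penalty x y = 0 \<longleftrightarrow> (x, y) \<in> Omega"
proof -
  have "omega_penalty x y = 0 \<longleftrightarrow>
      (\<forall>i. (min (x$i) 0)^2 + (min (y$i) 0)^2 + (min (1 - x$i - y$i) 0)^2 = 0)"
    unfolding omega_penalty_def by (subst sum_nonneg_eq_0_iff) auto
  also have "\<dots> \<longleftrightarrow> (x, y) \<in> Omega"
  proof -
    have "min a 0 = 0 \<longleftrightarrow> 0 \<le> a" for a :: real by (auto simp: min_def)
    then show ?thesis by (simp add: Omega_def add_nonneg_eq_0_iff algebra_simps)
  qed
  finally show ?thesis .
qed

lemma neg_part_le_sqrt_omega_penalty: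
  "- min (x$i) 0 \<le> sqrt (omega_penalty x y)"
  "- min (y$i) 0 \<le> sqrt (omega_penalty x y)"
  "- min (1 - x$i - y$i) 0 \<le> sqrt (omega_penalty x y)"
proof -
  have "(min (x$i) 0)^2 + (min (y$i) 0)^2 + (min (1 - x$i - y$i) 0)^2 \<le> omega_penalty x y"
    unfolding omega_penalty_def by (rule member_le_sum) auto
  then have "(min (x$i) 0)^2 \<le> omega_penalty x y" "(min (y$i) 0)^2 \<le> omega_penalty x y"
    "(min (1 - x$i - y$i) 0)^2 \<le> omega_penalty x y"
    by (smt (verit) zero_le_power2)+
  then show "- min (x$i) 0 \<le> sqrt (omega_penalty x y)"
    "- min (y$i) 0 \<le> sqrt (omega_penalty x y)"
    "- min (1 - x$i - y$i) 0 \<le> sqrt (omega_penalty x y)"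
    using real_sqrt_le_mono by fastforce+
qed

lemma norm_neg_part_le_sqrt_omega_penalty:
  "sqrt (\<Sum>j\<in>UNIV. (min (x$j) 0)^2) \<le> sqrt (omega_penalty x y)"
  "sqrt (\<Sum>j\<in>UNIV. (min (y$j) 0)^2) \<le> sqrt (omega_penalty x y)"
  unfolding omega_penalty_def by (intro real_sqrt_le_mono sum_mono; simp)+

lemma has_real_derivative_neg_part_square:
  "((\<lambda>x::real. (min x 0)^2) has_real_derivative 2 * min x 0) (at x)"
proof (cases x "0::real" rule: linorder_cases)
  case less
  have "((\<lambda>x::real. x^2) has_real_derivative 2 * x) (at x)"
    by (auto intro!: derivative_eq_intros)
  then have "((\<lambda>x::real. x^2) has_real_derivative 2 * min x 0) (at x)" using less by simp
  then show ?thesis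
    by (rule has_field_derivative_transform_within_open[where S="{..<0}"]) (use less in auto)
next
  case greater
  have "((\<lambda>x::real. 0) has_real_derivative 2 * min x 0) (at x)" using greater by simp
  then show ?thesis
    by (rule has_field_derivative_transform_within_open[where S="{0<..}"]) (use greater in auto)
next
  case equal
  have "((\<lambda>h::real. ((min (0 + h) 0)^2 - (min 0 0)^2) / h) \<longlongrightarrow> 0) (at 0)"
  proof (rule tendsto_0_le[where K=1])
    show "((\<lambda>h::real. h) \<longlongrightarrow> 0) (at 0)" by (rule tendsto_ident_at)
    have pw: "norm (((min (0 + h) 0)^2 - (min 0 (0::real))^2) / h) \<le> norm h * 1" for h :: real
      by (cases "h < 0") (auto simp: power2_eq_square abs_mult)
    show "\<forall>\<^sub>F h in at (0::real). norm (((min (0 + h) 0)^2 - (min 0 0)^2) / h) \<le> norm h * 1"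
      by (rule always_eventually, rule allI, rule pw)
  qed
  then show ?thesis using equal by (simp add: DERIV_def)
qed

lemma nonpos_mult_le_square:
  fixes a b s :: real
  assumes "a \<le> 0" "-a \<le> s" "b \<le> 0" "-b \<le> s"
  shows "a * b \<le> s^2"
proof -
  have "a * b = (-a) * (-b)" by simp
  also have "\<dots> \<le> s * s" using assms by (intro mult_mono) auto
  finally show ?thesis by (simp add: power2_eq_square)
qed

lemma neg_part_mult_le:
  fixes a x c s :: real
  assumes "a \<le> 0" "-a \<le> s" "- min x 0 \<le> s" "0 \<le> c"
  shows "a * (c * x) \<le> c * s^2"
proof (cases "0 \<le> x")
  case True
  then have "a * (c * x) \<le> 0" using assms by (simp add: mult_nonpos_nonneg)
  moreover have "0 \<le> c * s^2" using assms by simp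
  ultimately show ?thesis by linarith
next
  case False
  then have "a * x \<le> s^2" using nonpos_mult_le_square[OF assms(1,2), of x] assms(3) by simp
  then have "c * (a * x) \<le> c * s^2" using assms(4) by (intro mult_left_mono) auto
  then show ?thesis by (simp add: algebra_simps)
qed

lemma neg_part_mult_cross_le:
  fixes a y F s B L :: real
  assumes "0 \<le> B" "0 \<le> L" "0 \<le> s"
    and "\<bar>y\<bar> \<le> B" "\<bar>F\<bar> \<le> B" "- L * s \<le> F"
    and "a \<le> 0" "-a \<le> s" "- min y 0 \<le> s"
  shows "a * (y * F) \<le> B * (L + 1) * s^2"
proof (cases "0 \<le> y")
  case True
  have "- (B * L * s) \<le> y * F"
  proof -
    have "y * (- L * s) \<le> y * F" using True assms(6) by (intro mult_left_mono) auto
    moreover have "y * (L * s) \<le> B * (L * s)" using assms True by (intro mult_right_mono) auto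
    ultimately show ?thesis by (simp add: algebra_simps)
  qed
  then have "a * (y * F) \<le> a * (- (B * L * s))" using assms(7) by (rule mult_left_mono_neg)
  also have "\<dots> = (-a) * (B * L * s)" by simp
  also have "\<dots> \<le> s * (B * L * s)" using assms by (intro mult_right_mono) auto
  also have "\<dots> \<le> B * (L + 1) * s^2" using assms by (simp add: power2_eq_square algebra_simps)
  finally show ?thesis .
next
  case False
  then have ay: "a * y \<le> s^2" "0 \<le> a * y"
    using nonpos_mult_le_square[OF assms(7,8), of y] assms(7,9) by (simp_all add: mult_nonpos_nonpos)
  have "a * (y * F) \<le> a * y * \<bar>F\<bar>"
    using ay(2) by (simp add: mult.assoc[symmetric] mult_left_mono)
  also have "\<dots> \<le> s^2 * B" using ay assms(5) by (intro mult_mono) auto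
  also have "\<dots> \<le> B * (L + 1) * s^2" using assms by (simp add: algebra_simps)
  finally show ?thesis .
qed

lemma neg_part_mult_square_le:
  fixes x G s B :: real
  assumes "0 \<le> B" "\<bar>G\<bar> \<le> B" "- min x 0 \<le> s"
  shows "- (min x 0 * (x * G)) \<le> B * s^2"
proof -
  have "min x 0 * x = (min x 0)^2" by (simp add: min_def power2_eq_square)
  then have "- (min x 0 * (x * G)) = (min x 0)^2 * (-G)" by (simp add: mult.assoc[symmetric])
  also have "\<dots> \<le> (min x 0)^2 * B" using assms(2) by (intro mult_left_mono) auto
  also have "\<dots> \<le> s^2 * B"
    using assms(1,3) power_mono[of "- min x 0" s 2] by (intro mult_right_mono) auto
  finally show ?thesis by (simp add: mult.commute)
qed

lemma neg_part_mult_self_nonpos: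
  fixes x c :: real
  assumes "0 \<le> c"
  shows "- (min x 0 * (c * x)) \<le> 0"
proof -
  have "min x 0 * (c * x) = c * (min x 0 * x)" by (simp add: algebra_simps)
  also have "\<dots> = c * (min x 0)^2" by (simp add: min_def power2_eq_square)
  finally show ?thesis using assms by (metis neg_le_0_iff_le zero_le_mult_iff zero_le_power2)
qed

text \<open>The derivative of the penalty along the flow, one vertex at a time: every term is either
  nonpositive or quadratic in the negative parts of x, y and 1 - x - y.\<close>

lemma penalty_rate_component_le:
  fixes x y F G \<theta> \<delta> s B L :: real
  assumes B: "0 \<le> B" "0 \<le> L" "0 < \<theta>" "0 < \<delta>" "0 \<le> s"
    and bounds: "\<bar>x\<bar> \<le> B" "\<bar>y\<bar> \<le> B" "\<bar>F\<bar> \<le> B" "\<bar>G\<bar> \<le> B" "- L * s \<le> F" "- L * s \<le> G"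
    and nx: "- min x 0 \<le> s" and ny: "- min y 0 \<le> s" and nz: "- min (1 - x - y) 0 \<le> s"
  shows "2 * min x 0 * (y * F - x * G - \<theta> * x)
       + 2 * min y 0 * (x * G - y * F + \<delta> * (1 - x - y))
       + 2 * min (1 - x - y) 0 * (- ((y * F - x * G - \<theta> * x) + (x * G - y * F + \<delta> * (1 - x - y))))
       \<le> (4 * B * (L + 1) + 4 * B + 2 * \<delta> + 2 * \<theta>) * s^2"
proof -
  define z where "z = 1 - x - y"
  have x0: "min x 0 \<le> 0" and y0: "min y 0 \<le> 0" and z0: "min z 0 \<le> 0" "- min z 0 \<le> s"
    using nz by (auto simp: z_def)
  have "min x 0 * (y * F) \<le> B * (L + 1) * s^2"
    by (rule neg_part_mult_cross_le[OF B(1,2,5) bounds(2,3,5) x0 nx ny])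
  moreover have "min y 0 * (x * G) \<le> B * (L + 1) * s^2"
    by (rule neg_part_mult_cross_le[OF B(1,2,5) bounds(1,4,6) y0 ny nx])
  moreover have "- (min x 0 * (x * G)) \<le> B * s^2"
    by (rule neg_part_mult_square_le[OF B(1) bounds(4) nx])
  moreover have "- (min y 0 * (y * F)) \<le> B * s^2"
    by (rule neg_part_mult_square_le[OF B(1) bounds(3) ny])
  moreover have "- (min x 0 * (\<theta> * x)) \<le> 0" "- (min z 0 * (\<delta> * z)) \<le> 0"
    using B(3,4) neg_part_mult_self_nonpos less_imp_le by blast+
  moreover have "min y 0 * (\<delta> * z) \<le> \<delta> * s^2"
    by (rule neg_part_mult_le[OF y0 ny z0(2)]) (use B(4) in simp)
  moreover have "min z 0 * (\<theta> * x) \<le> \<theta> * s^2"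
    by (rule neg_part_mult_le[OF z0 nx]) (use B(3) in simp)
  moreover have "2 * min x 0 * (y * F - x * G - \<theta> * x) + 2 * min y 0 * (x * G - y * F + \<delta> * z)
      + 2 * min z 0 * (- ((y * F - x * G - \<theta> * x) + (x * G - y * F + \<delta> * z)))
    = 2 * (min x 0 * (y * F)) + 2 * (- (min x 0 * (x * G))) + 2 * (- (min x 0 * (\<theta> * x)))
      + 2 * (min y 0 * (x * G)) + 2 * (- (min y 0 * (y * F))) + 2 * (min y 0 * (\<delta> * z))
      + 2 * (min z 0 * (\<theta> * x)) + 2 * (- (min z 0 * (\<delta> * z)))"
    by (simp add: algebra_simps)
  ultimately show ?thesis unfolding z_def by (simp add: algebra_simps)
qed

section \<open>Solutions of the SURQT model\<close>

locale surqt_solution =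
  fixes f g :: "'n::finite \<Rightarrow> real^'n \<Rightarrow> real"
    and \<theta> \<delta> :: "real^'n"
    and R T :: "real \<Rightarrow> real^'n"
  assumes theta_pos: "\<forall>i. \<theta> $ i > 0"
    and delta_pos: "\<forall>i. \<delta> $ i > 0"
    and f_mono: "\<forall>i x y. (\<forall>k. x$k \<le> y$k) \<longrightarrow> f i x \<le> f i y"
    and g_mono: "\<forall>i x y. (\<forall>k. x$k \<le> y$k) \<longrightarrow> g i x \<le> g i y"
    and f_0: "\<forall>i. f i 0 = 0"
    and g_0: "\<forall>i. g i 0 = 0"
    and f_C2: "\<forall>i. twice_cont_diff (f i)"
    and g_C2: "\<forall>i. twice_cont_diff (g i)"
    and odeR: "\<forall>t\<ge>0. (R has_vector_derivative
                 (\<chi> i. T t $ i * f i (R t) - R t $ i * g i (T t) - \<theta> $ i * R t $ i))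
                 (at t within {0..})"
    and odeT: "\<forall>t\<ge>0. (T has_vector_derivative
                 (\<chi> i. R t $ i * g i (T t) - T t $ i * f i (R t)
                        + \<delta> $ i * (1 - R t $ i - T t $ i)))
                 (at t within {0..})"
    and init: "\<forall>i. R 0 $ i \<ge> 0 \<and> T 0 $ i \<ge> 0 \<and> R 0 $ i + T 0 $ i \<le> 1"
begin

definition rate_R :: "'n \<Rightarrow> real \<Rightarrow> real" where
  "rate_R i t = T t $ i * f i (R t) - R t $ i * g i (T t) - \<theta> $ i * R t $ i"

definition rate_T :: "'n \<Rightarrow> real \<Rightarrow> real" where
  "rate_T i t = R t $ i * g i (T t) - T t $ i * f i (R t) + \<delta> $ i * (1 - R t $ i - T t $ i)"

lemma R_component_derivative:
  "0 \<le> t \<Longrightarrow> ((\<lambda>t. R t $ i) has_real_derivative rate_R i t) (at t within {0..})"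
  using has_real_derivative_vec_nth[OF odeR[rule_format], of t i] by (simp add: rate_R_def)

lemma T_component_derivative:
  "0 \<le> t \<Longrightarrow> ((\<lambda>t. T t $ i) has_real_derivative rate_T i t) (at t within {0..})"
  using has_real_derivative_vec_nth[OF odeT[rule_format], of t i] by (simp add: rate_T_def)

lemma solution_bounded_on_Icc:
  obtains r where "0 \<le> r" "\<And>t. t \<in> {0..t1} \<Longrightarrow> norm (R t) \<le> r \<and> norm (T t) \<le> r"
proof -
  have "continuous (at t within {0..t1}) R" "continuous (at t within {0..t1}) T"
    if "t \<in> {0..t1}" for t
    using continuous_within_subset[of t "{0..}" _ "{0..t1}"] that
      has_vector_derivative_continuous[OF odeR[rule_format]]
      has_vector_derivative_continuous[OF odeT[rule_format]] by auto
  then have "bounded (R ` {0..t1})" "bounded (T ` {0..t1})"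
    by (auto simp: continuous_on_eq_continuous_within
        intro!: compact_imp_bounded compact_continuous_image)
  then obtain r1 r2 where "\<forall>t\<in>{0..t1}. norm (R t) \<le> r1" "\<forall>t\<in>{0..t1}. norm (T t) \<le> r2"
    unfolding bounded_iff by auto
  then show ?thesis using that[of "max (max r1 r2) 0"] by fastforce
qed

lemma a_priori_bounds:
  obtains B L where "0 \<le> B" "0 \<le> L"
    and "\<And>t i. t \<in> {0..t1} \<Longrightarrow>
      \<bar>R t $ i\<bar> \<le> B \<and> \<bar>T t $ i\<bar> \<le> B \<and> \<bar>f i (R t)\<bar> \<le> B \<and> \<bar>g i (T t)\<bar> \<le> B"
    and "\<And>t i. t \<in> {0..t1} \<Longrightarrow>
      - L * sqrt (omega_penalty (R t) (T t)) \<le> f i (R t) \<and>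
      - L * sqrt (omega_penalty (R t) (T t)) \<le> g i (T t)"
proof -
  obtain r where r0: "0 \<le> r" and r: "\<And>t. t \<in> {0..t1} \<Longrightarrow> norm (R t) \<le> r \<and> norm (T t) \<le> r"
    using solution_bounded_on_Icc by blast
  obtain Lf where "0 \<le> Lf"
    and Lf: "\<forall>i. \<forall>x\<in>cball 0 r. \<forall>y\<in>cball 0 r. \<bar>f i x - f i y\<bar> \<le> Lf * norm (x - y)"
    using uniform_lipschitz_on_cball[OF f_C2] by blast
  obtain Lg where
    Lg: "\<forall>i. \<forall>x\<in>cball 0 r. \<forall>y\<in>cball 0 r. \<bar>g i x - g i y\<bar> \<le> Lg * norm (x - y)"
    using uniform_lipschitz_on_cball[OF g_C2] by blast
  define L where "L = max Lf Lg"
  have L: "0 \<le> L" using \<open>0 \<le> Lf\<close> by (simp add: L_def)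
  have "Lf \<le> L" "Lg \<le> L" by (simp_all add: L_def)
  then have Lf': "\<forall>x\<in>cball 0 r. \<forall>y\<in>cball 0 r. \<bar>f i x - f i y\<bar> \<le> L * norm (x - y)"
    and Lg': "\<forall>x\<in>cball 0 r. \<forall>y\<in>cball 0 r. \<bar>g i x - g i y\<bar> \<le> L * norm (x - y)" for i
    using Lf Lg by (blast intro: order_trans mult_right_mono norm_ge_zero)+
  have "\<forall>x y. (\<forall>k. x$k \<le> y$k) \<longrightarrow> f i x \<le> f i y"
    and "\<forall>x y. (\<forall>k. x$k \<le> y$k) \<longrightarrow> g i x \<le> g i y" for i using f_mono g_mono by blast+
  note bounds = monotone_lipschitz_bounds[OF this(1) _ Lf' L] monotone_lipschitz_bounds[OF this(2) _ Lg' L]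
  have f_bounds: "- L * s \<le> f i x \<and> \<bar>f i x\<bar> \<le> L * r"
    and g_bounds: "- L * s \<le> g i x \<and> \<bar>g i x\<bar> \<le> L * r"
    if "norm x \<le> r" "sqrt (\<Sum>j\<in>UNIV. (min (x$j) 0)^2) \<le> s" for i x s
    using bounds[OF _ that] f_0 g_0 by blast+
  show ?thesis
  proof (rule that[of "r + L * r" L])
    fix t i assume t: "t \<in> {0..t1}"
    let ?s = "sqrt (omega_penalty (R t) (T t))"
    have "\<bar>R t $ i\<bar> \<le> r" "\<bar>T t $ i\<bar> \<le> r"
      using r[OF t] component_le_norm_cart[of "R t" i] component_le_norm_cart[of "T t" i] by auto
    moreover have "- L * ?s \<le> f i (R t) \<and> \<bar>f i (R t)\<bar> \<le> L * r"
      "- L * ?s \<le> g i (T t) \<and> \<bar>g i (T t)\<bar> \<le> L * r"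
      using f_bounds g_bounds r[OF t] norm_neg_part_le_sqrt_omega_penalty by blast+
    ultimately show "\<bar>R t $ i\<bar> \<le> r + L * r \<and> \<bar>T t $ i\<bar> \<le> r + L * r
        \<and> \<bar>f i (R t)\<bar> \<le> r + L * r \<and> \<bar>g i (T t)\<bar> \<le> r + L * r"
      and "- L * ?s \<le> f i (R t) \<and> - L * ?s \<le> g i (T t)"
      using L r0 by auto
  qed (use L r0 in auto)
qed

definition penalty_rate :: "real \<Rightarrow> real" where
  "penalty_rate t = (\<Sum>i\<in>UNIV. 2 * min (R t $ i) 0 * rate_R i t + 2 * min (T t $ i) 0 * rate_T i t
     + 2 * min (1 - R t $ i - T t $ i) 0 * (- (rate_R i t + rate_T i t)))"

lemma penalty_derivative:
  assumes "0 \<le> t"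
  shows "((\<lambda>t. omega_penalty (R t) (T t)) has_real_derivative penalty_rate t) (at t within {0..})"
proof -
  note R' = R_component_derivative[OF assms] and T' = T_component_derivative[OF assms]
  have "((\<lambda>t. 1 - R t $ i - T t $ i) has_real_derivative - (rate_R i t + rate_T i t))
      (at t within {0..})" for i
    using DERIV_diff[OF DERIV_diff[OF DERIV_const R'] T'] by simp
  note chain = DERIV_chain2[OF has_real_derivative_neg_part_square]
  show ?thesis
    unfolding omega_penalty_def penalty_rate_def
    by (intro DERIV_sum DERIV_add chain R' T' \<open>\<And>i. ((\<lambda>t. 1 - R t $ i - T t $ i) has_real_derivative _) _\<close>)
qed

lemma penalty_rate_le:
  obtains K where "\<And>t. t \<in> {0..t1} \<Longrightarrow> penalty_rate t \<le> K * omega_penalty (R t) (T t)"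
proof -
  obtain B L where B: "0 \<le> B" "0 \<le> L"
    and bounds: "\<And>t i. t \<in> {0..t1} \<Longrightarrow>
      \<bar>R t $ i\<bar> \<le> B \<and> \<bar>T t $ i\<bar> \<le> B \<and> \<bar>f i (R t)\<bar> \<le> B \<and> \<bar>g i (T t)\<bar> \<le> B"
    and lower: "\<And>t i. t \<in> {0..t1} \<Longrightarrow>
      - L * sqrt (omega_penalty (R t) (T t)) \<le> f i (R t) \<and>
      - L * sqrt (omega_penalty (R t) (T t)) \<le> g i (T t)"
    using a_priori_bounds by blast
  define c where "c i = 4 * B * (L + 1) + 4 * B + 2 * \<delta> $ i + 2 * \<theta> $ i" for i
  have "penalty_rate t \<le> (\<Sum>i\<in>UNIV. c i) * omega_penalty (R t) (T t)" if t: "t \<in> {0..t1}" for t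
  proof -
    let ?s = "sqrt (omega_penalty (R t) (T t))"
    have "penalty_rate t \<le> (\<Sum>i\<in>UNIV. c i * ?s^2)"
      unfolding penalty_rate_def
    proof (rule sum_mono)
      fix i
      show "2 * min (R t $ i) 0 * rate_R i t + 2 * min (T t $ i) 0 * rate_T i t
          + 2 * min (1 - R t $ i - T t $ i) 0 * (- (rate_R i t + rate_T i t)) \<le> c i * ?s^2"
        unfolding rate_R_def rate_T_def c_def
        by (rule penalty_rate_component_le[OF B theta_pos[rule_format] delta_pos[rule_format]
              real_sqrt_ge_zero[OF omega_penalty_nonneg]])
          (use bounds[OF t, of i] lower[OF t, of i] neg_part_le_sqrt_omega_penalty in auto)
    qed
    then show ?thesis by (simp add: sum_distrib_right omega_penalty_nonneg)
  qed
  then show ?thesis by (rule that)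
qed

text \<open>The penalty vanishes at time 0 and grows at most exponentially, so it vanishes forever.\<close>

lemma solution_in_Omega:
  assumes "0 \<le> t1"
  shows "(R t1, T t1) \<in> Omega"
proof -
  obtain K where K: "\<And>t. t \<in> {0..t1} \<Longrightarrow> penalty_rate t \<le> K * omega_penalty (R t) (T t)"
    using penalty_rate_le by blast
  have "\<forall>t\<in>{0..t1}. ((\<lambda>t. omega_penalty (R t) (T t)) has_real_derivative penalty_rate t)
      (at t within {0..t1})"
    by (auto intro: DERIV_subset[OF penalty_derivative])
  from differential_inequality_exp_bound[OF assms this] K
  have "omega_penalty (R t1) (T t1) \<le> omega_penalty (R 0) (T 0) * exp (K * (t1 - 0))"
    by blast
  moreover have "omega_penalty (R 0) (T 0) = 0"
    using init by (simp add: omega_penalty_eq_0_iff Omega_def)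
  ultimately have "omega_penalty (R t1) (T t1) = 0"
    using omega_penalty_nonneg[of "R t1" "T t1"] by simp
  then show ?thesis by (simp add: omega_penalty_eq_0_iff)
qed


lemma solution_components:
  assumes "0 \<le> t"
  shows "0 \<le> R t $ i" "0 \<le> T t $ i" "R t $ i + T t $ i \<le> 1"
  using solution_in_Omega[OF assms] by (auto simp: Omega_def)

lemma f_nonneg: "0 \<le> t \<Longrightarrow> 0 \<le> f i (R t)"
  using f_mono[rule_format, of 0 "R t" i] f_0 solution_in_Omega[of t] by (simp add: Omega_def)

lemma g_nonneg: "0 \<le> t \<Longrightarrow> 0 \<le> g i (T t)"
  using g_mono[rule_format, of 0 "T t" i] g_0 solution_in_Omega[of t] by (simp add: Omega_def)

lemma rate_R_le:
  assumes "0 \<le> t" "f i (R t) \<le> F"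
  shows "rate_R i t \<le> F - \<theta> $ i * R t $ i"
proof -
  have "0 \<le> R t $ i" "0 \<le> T t $ i" "T t $ i \<le> 1"
    using solution_components[OF assms(1), of i] by linarith+
  then have "T t $ i * f i (R t) \<le> f i (R t)" "0 \<le> R t $ i * g i (T t)"
    using f_nonneg[OF assms(1)] g_nonneg[OF assms(1)] by (simp_all add: mult_left_le_one_le)
  then show ?thesis using assms(2) by (simp add: rate_R_def)
qed

lemma rate_T_ge:
  assumes "0 \<le> t"
  shows "- rate_T i t \<le> - \<delta> $ i * (1 - T t $ i) + (\<delta> $ i * R t $ i + f i (R t))"
proof -
  have "0 \<le> R t $ i" "0 \<le> T t $ i" "T t $ i \<le> 1"
    using solution_components[OF assms, of i] by linarith+
  then have "T t $ i * f i (R t) \<le> f i (R t)" "0 \<le> R t $ i * g i (T t)"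
    using f_nonneg[OF assms] g_nonneg[OF assms] by (simp_all add: mult_left_le_one_le)
  then show ?thesis by (simp add: rate_T_def algebra_simps)
qed

lemma weighted_total_rate_le:
  assumes f_le: "\<forall>i x. f i x \<le> (J *v x) $ i"
    and w: "\<forall>i. 0 \<le> w$i" "w v* (J - diag_mat \<theta>) = - 1" and t: "0 \<le> t"
  shows "(\<Sum>i\<in>UNIV. w$i * rate_R i t) \<le> - (\<Sum>j\<in>UNIV. R t $ j)"
proof -
  have "(\<Sum>i\<in>UNIV. w$i * rate_R i t) \<le> (\<Sum>i\<in>UNIV. w$i * ((J - diag_mat \<theta>) *v R t) $ i)"
    using rate_R_le[OF t f_le[rule_format]] w(1)
    by (intro sum_mono mult_left_mono)
      (auto simp: matrix_vector_mult_diff_rdistrib diag_mat_matrix_vector_mult_nth)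
  also have "\<dots> = inner w ((J - diag_mat \<theta>) *v R t)"
    by (simp add: inner_vec_def)
  also have "\<dots> = inner (w v* (J - diag_mat \<theta>)) (R t)"
    by (rule dot_lmul_matrix[symmetric])
  also have "\<dots> = - (\<Sum>j\<in>UNIV. R t $ j)"
    using w(2) by (simp add: inner_vec_def sum_negf)
  finally show ?thesis .
qed

text \<open>With w the positive left vector of the stable Metzler matrix J - diag \<theta>, the weighted
  total V = \<Sum> w i R i is a linear Lyapunov function: V' \<le> - \<Sum> R i \<le> - V / \<Sum> w i.\<close>

lemma R_tendsto_0:
  assumes f_le: "\<forall>i x. f i x \<le> (J *v x) $ i"
    and Q: "metzler (J - diag_mat \<theta>)" "spectral_abscissa (J - diag_mat \<theta>) < 0"
  shows "(R \<longlongrightarrow> 0) at_top"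
proof -
  obtain w where w: "\<forall>i. 0 < w$i" "w v* (J - diag_mat \<theta>) = - 1"
    using positive_left_vector_of_stable_metzler[OF Q] by blast
  define W where "W = (\<Sum>i\<in>UNIV. w$i)"
  have w_le: "w$i \<le> W" for i
    unfolding W_def using w(1) by (intro member_le_sum) (auto intro: less_imp_le)
  then have W: "0 < W" using w(1) by (meson less_le_trans)
  define V where "V t = (\<Sum>i\<in>UNIV. w$i * R t $ i)" for t
  note R_nonneg = solution_components(1)
  have V_nonneg: "\<forall>t\<ge>0. 0 \<le> V t"
    unfolding V_def using w(1) R_nonneg
    by (intro allI impI sum_nonneg mult_nonneg_nonneg) (auto intro: less_imp_le)
  have V': "\<forall>t\<ge>0. (V has_real_derivative (\<Sum>i\<in>UNIV. w$i * rate_R i t)) (at t within {0..})"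
    unfolding V_def by (auto intro!: DERIV_sum DERIV_cmult R_component_derivative)
  have "\<forall>t\<ge>0. (\<Sum>i\<in>UNIV. w$i * rate_R i t) \<le> - (1 / W) * V t + 0"
  proof (intro allI impI)
    fix t :: real assume t: "0 \<le> t"
    have "V t \<le> W * (\<Sum>j\<in>UNIV. R t $ j)"
      unfolding V_def sum_distrib_left using w_le R_nonneg[OF t]
      by (intro sum_mono mult_right_mono) auto
    then have "V t / W \<le> (\<Sum>j\<in>UNIV. R t $ j)"
      using W by (simp add: divide_le_eq mult.commute)
    moreover have "(\<Sum>i\<in>UNIV. w$i * rate_R i t) \<le> - (\<Sum>j\<in>UNIV. R t $ j)"
      using weighted_total_rate_le[OF f_le _ w(2) t] w(1) by (simp add: less_imp_le)
    ultimately show "(\<Sum>i\<in>UNIV. w$i * rate_R i t) \<le> - (1 / W) * V t + 0" by simp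
  qed
  from tendsto_0_of_differential_inequality[OF _ V' this tendsto_const V_nonneg]
  have "(V \<longlongrightarrow> 0) at_top" using W by simp
  then show ?thesis
    using vec_tendsto_0_of_weighted_sum[OF w(1)] R_nonneg unfolding V_def by blast
qed

lemma T_tendsto_1:
  assumes "(R \<longlongrightarrow> 0) at_top"
  shows "(T \<longlongrightarrow> (\<chi> i. 1)) at_top"
proof -
  have "((\<lambda>t. 1 - T t $ i) \<longlongrightarrow> 0) at_top" for i
  proof (rule tendsto_0_of_differential_inequality)
    show "0 < \<delta> $ i" using delta_pos by blast
    show "\<forall>t\<ge>0. ((\<lambda>t. 1 - T t $ i) has_real_derivative - rate_T i t) (at t within {0..})"
      by (auto intro!: derivative_eq_intros T_component_derivative)
    show "\<forall>t\<ge>0. - rate_T i t \<le> - \<delta> $ i * (1 - T t $ i) + (\<delta> $ i * R t $ i + f i (R t))"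
      using rate_T_ge by blast
    have "isCont (f i) 0"
      using twice_cont_diff_imp_continuous f_C2 continuous_on_eq_continuous_at by blast
    then have "((\<lambda>t. f i (R t)) \<longlongrightarrow> 0) at_top"
      using isCont_tendsto_compose[OF _ assms] f_0 by fastforce
    moreover have "((\<lambda>t. R t $ i) \<longlongrightarrow> 0) at_top"
      using tendsto_vec_nth[OF assms] by simp
    ultimately show "((\<lambda>t. \<delta> $ i * R t $ i + f i (R t)) \<longlongrightarrow> 0) at_top"
      by (auto intro!: tendsto_add_zero tendsto_mult_right_zero)
    show "\<forall>t\<ge>0. 0 \<le> 1 - T t $ i"
      using solution_components by (smt (verit))
  qed
  then have "((\<lambda>t. T t $ i) \<longlongrightarrow> 1) at_top" for i
    using tendsto_diff[OF tendsto_const, of "\<lambda>t. 1 - T t $ i" 0 at_top 1] by simp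
  then show ?thesis by (auto intro: vec_tendstoI)
qed

end

theorem theorem3:
  fixes ER ET :: "('n::finite \<times> 'n) set"
    and f g :: "'n \<Rightarrow> real^'n \<Rightarrow> real"
    and \<theta> \<delta> :: "real^'n"
    and J :: "real^'n^'n"
    and R T :: "real \<Rightarrow> real^'n"
  assumes SC_R: "strongly_connected ER"
    and SC_T: "strongly_connected ET"
    and theta_pos: "\<forall>i. \<theta> $ i > 0"
    and delta_pos: "\<forall>i. \<delta> $ i > 0"
    and C1f: "\<forall>i j. depends_on (f i) j \<longleftrightarrow> (i, j) \<in> ER"
    and C1g: "\<forall>i j. depends_on (g i) j \<longleftrightarrow> (i, j) \<in> ET"
    and C2f: "\<forall>i. f i 0 = 0"
    and C2g: "\<forall>i. g i 0 = 0"
    and C3f: "\<forall>i. twice_cont_diff (f i)"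
    and C3g: "\<forall>i. twice_cont_diff (g i)"
    and C4f: "\<forall>i j. (i, j) \<in> ER \<longrightarrow> strictly_incr_in (f i) j"
    and C4g: "\<forall>i j. (i, j) \<in> ET \<longrightarrow> strictly_incr_in (g i) j"
    and C5f: "\<forall>i. concave_on UNIV (f i)"
    and C5g: "\<forall>i. concave_on UNIV (g i)"
    and jac: "((\<lambda>x. \<chi> i. f i x) has_derivative (\<lambda>h. J *v h)) (at 0)"
    and stab: "spectral_abscissa (J - diag_mat \<theta>) < 0"
    and odeR: "\<forall>t\<ge>0. (R has_vector_derivative
                 (\<chi> i. T t $ i * f i (R t) - R t $ i * g i (T t) - \<theta> $ i * R t $ i))
                 (at t within {0..})"
    and odeT: "\<forall>t\<ge>0. (T has_vector_derivative
                 (\<chi> i. R t $ i * g i (T t) - T t $ i * f i (R t)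
                        + \<delta> $ i * (1 - R t $ i - T t $ i)))
                 (at t within {0..})"
    and init: "\<forall>i. R 0 $ i \<ge> 0 \<and> T 0 $ i \<ge> 0 \<and> R 0 $ i + T 0 $ i \<le> 1"
  shows "(R \<longlongrightarrow> 0) at_top \<and> (T \<longlongrightarrow> (\<chi> i. 1)) at_top
         \<and> ((\<lambda>t. (\<Sum>i\<in>UNIV. R t $ i) / real CARD('n)) \<longlongrightarrow> 0) at_top
         \<and> ((\<lambda>t. (\<Sum>i\<in>UNIV. T t $ i) / real CARD('n)) \<longlongrightarrow> 1) at_top"
proof -
  have f_mono: "\<forall>i x y. (\<forall>k. x$k \<le> y$k) \<longrightarrow> f i x \<le> f i y"
    and g_mono: "\<forall>i x y. (\<forall>k. x$k \<le> y$k) \<longrightarrow> g i x \<le> g i y"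
    using componentwise_mono_of_dependence[OF C1f C4f] componentwise_mono_of_dependence[OF C1g C4g]
    by blast+
  interpret surqt_solution f g \<theta> \<delta> R T
    using theta_pos delta_pos f_mono g_mono C2f C2g C3f C3g odeR odeT init by unfold_locales
  have "metzler (J - diag_mat \<theta>)"
    using jacobian_nonneg[OF jac f_mono] by (simp add: metzler_def diag_mat_def)
  moreover have "\<forall>i x. f i x \<le> (J *v x) $ i"
    using concave_le_jacobian[OF jac] C5f C2f by blast
  ultimately have R_lim: "(R \<longlongrightarrow> 0) at_top"
    using R_tendsto_0 stab by blast
  have T_lim: "(T \<longlongrightarrow> (\<chi> i. 1)) at_top"
    by (rule T_tendsto_1[OF R_lim])
  show ?thesis
    using R_lim T_lim tendsto_average[OF R_lim] tendsto_average[OF T_lim] by simp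
qed

end
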